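(* The class $\mathbf{GRLOWJ}$ is not closed under (1) intersection, (2) concatenation, and (3) reversal.
   Context: The reversal of a language $L$ is $L^R=\{w^R:w\in L\}$, where $(a_1\cdots a_n)^R=a_n\cdots a_1$. "Subword" means a contiguous factor. A GRLOWJFA is a tuple $\mathcal{A}=(\Sigma,Q,q_0,F,R)$ with $\Sigma$ a finite alphabet, $Q$ a finite state set, $q_0\in Q$, $F\subseteq Q$, and $R\subset Q\times\Sigma^+\times Q$ a finite set of rules such that for each $p\in Q$, $w\in\Sigma^+$ at most one $q$ has $(p,w,q)\in R$ (meaning: go from $p$ to $q$ deleting $w$). $\Sigma_p=\{w:(p,w,q)\in R\text{ for some }q\}$. Configurations lie in $\Sigma^*Q\Sigma^*$. Moves $\curvearrowright$: (1) for $t,u,v\in\Sigma^*$ and $(p,x,q)\in R$: $tpuxv\curvearrowright tuqv$ provided $u$ contains no word of $\Sigma_p$ as a subword and there are no $u_1,x_2\in\Sigma^*$, $u_2,x_1\in\Sigma^+$ with $u=u_1u_2$, $x=x_1x_2$, $u_2x_1=x$; (2) for $x\in\Sigma^+$, $y\in\Sigma^*$ with $y$ containing no word of $\Sigma_p$ as a subword: $xpy\curvearrowright pxy$. $L_{GRL}(\mathcal{A})=\{w\in\Sigma^*: q_0w\curvearrowright^* q_f \text{ for some } q_f\in F\}$. $\mathbf{GRLOWJ}$ is the class of languages so accepted. *)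

theory Defs
  imports Main "HOL-Library.Sublist"
begin

definition is_GRLOWJFA ::
  "'a set \<Rightarrow> nat set \<Rightarrow> nat \<Rightarrow> nat set \<Rightarrow> (nat \<times> 'a list \<times> nat) set \<Rightarrow> bool" where
  "is_GRLOWJFA \<Sigma> Q q0 F R \<longleftrightarrow>
     finite \<Sigma> \<and> finite Q \<and> q0 \<in> Q \<and> F \<subseteq> Q \<and> finite R \<and>
     R \<subseteq> Q \<times> (lists \<Sigma> - {[]}) \<times> Q \<and>
     (\<forall>p w q q'. (p, w, q) \<in> R \<longrightarrow> (p, w, q') \<in> R \<longrightarrow> q = q')"

definition Sigma_st :: "(nat \<times> 'a list \<times> nat) set \<Rightarrow> nat \<Rightarrow> 'a list set" where
  "Sigma_st R p = {w. \<exists>q. (p, w, q) \<in> R}"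

definition no_factor :: "'a list set \<Rightarrow> 'a list \<Rightarrow> bool" where
  "no_factor S u \<longleftrightarrow> \<not> (\<exists>w\<in>S. sublist w u)"

text \<open>Configurations t p v (in \<Sigma>* Q \<Sigma>*) are triples (t, p, v).\<close>

inductive grl_step :: "(nat \<times> 'a list \<times> nat) set \<Rightarrow>
    ('a list \<times> nat \<times> 'a list) \<Rightarrow> ('a list \<times> nat \<times> 'a list) \<Rightarrow> bool"
  for R where
  delete: "\<lbrakk> (p, x, q) \<in> R; no_factor (Sigma_st R p) u;
             \<not> (\<exists>u1 u2 x1 x2. u = u1 @ u2 \<and> x = x1 @ x2 \<and> u2 \<noteq> [] \<and> x1 \<noteq> [] \<and> u2 @ x1 = x) \<rbrakk>
           \<Longrightarrow> grl_step R (t, p, u @ x @ v) (t @ u, q, v)"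
| wrap: "\<lbrakk> x \<noteq> []; no_factor (Sigma_st R p) y \<rbrakk>
           \<Longrightarrow> grl_step R (x, p, y) ([], p, x @ y)"

definition L_GRL :: "'a set \<Rightarrow> nat \<Rightarrow> nat set \<Rightarrow> (nat \<times> 'a list \<times> nat) set \<Rightarrow> 'a list set" where
  "L_GRL \<Sigma> q0 F R = {w \<in> lists \<Sigma>. \<exists>qf\<in>F. (grl_step R)\<^sup>*\<^sup>* ([], q0, w) ([], qf, [])}"

definition GRLOWJ :: "'a list set set" where
  "GRLOWJ = {L. \<exists>\<Sigma> Q q0 F R. is_GRLOWJFA \<Sigma> Q q0 F R \<and> L = L_GRL \<Sigma> q0 F R}"

definition conc :: "'a list set \<Rightarrow> 'a list set \<Rightarrow> 'a list set" where
  "conc L1 L2 = {u @ v | u v. u \<in> L1 \<and> v \<in> L2}"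

end

theory Submission
  imports Defs "HOL-Library.Multiset"
begin

text \<open>
  The witness is the language \<open>Bal_marked\<close> of words \<open>w 2\<close> with \<open>w \<in> {0,1}\<^sup>*\<close>
  containing as many 0s as 1s. It is the intersection of the GRLOWJ languages
  \<open>{u 2 v | uv balanced}\<close> and \<open>{0,1}\<^sup>* 2\<close>, the concatenation of the balanced words
  with \<open>{2}\<close>, and the reversal of the language of words \<open>2 w\<close> with \<open>w\<close> balanced; all of
  these are accepted by small automata that cancel the factors \<open>01\<close> and \<open>10\<close>.

  It is not itself in GRLOWJ. On the input \<open>0\<^sup>n 1\<^sup>n 2\<close> the marker can only be deleted
  last, so between two wraps the automaton works on a word \<open>0\<^sup>i 1\<^sup>j 2\<close> and deletes a
  block of factors of 0s, at most one mixed factor and a block of factors of 1s; each block is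
  shorter than the number of states, for otherwise a cycle with an unbalanced label could be
  pumped. A state at which the automaton wraps lies on no cycle: the label of such a cycle could
  be appended to the input and deleted right after the marker, yielding an accepted word that
  does not end with 2. Hence successive wrap states have strictly decreasing sets of successors,
  there are at most as many passes as states, and only a bounded number of letters can be
  consumed, independently of \<open>n\<close>.
\<close>

section \<open>Runs of deletions along paths of rules\<close>

type_synonym 'a rules = "(nat \<times> 'a list \<times> nat) set"

text \<open>\<open>overlaps u x\<close>: an occurrence of \<open>x\<close> begins inside \<open>u\<close> and ends inside the
  occurrence of \<open>x\<close> that follows \<open>u\<close> (the side condition of deletion moves).\<close>

definition overlaps :: "'a list \<Rightarrow> 'a list \<Rightarrow> bool" where
  "overlaps u x \<longleftrightarrow>
     (\<exists>u1 u2 x1 x2. u = u1 @ u2 \<and> x = x1 @ x2 \<and> u2 \<noteq> [] \<and> x1 \<noteq> [] \<and> u2 @ x1 = x)"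

lemma grl_step_delete:
  "(p, x, q) \<in> R \<Longrightarrow> no_factor (Sigma_st R p) u \<Longrightarrow> \<not> overlaps u x \<Longrightarrow>
   grl_step R (t, p, u @ x @ v) (t @ u, q, v)"
  unfolding overlaps_def by (rule grl_step.delete)

lemma overlaps_last:
  assumes "overlaps u x"
  shows "u \<noteq> [] \<and> last u \<in> set x"
proof -
  obtain u1 u2 x1 where "u = u1 @ u2" "u2 \<noteq> []" "u2 @ x1 = x"
    using assms unfolding overlaps_def by blast
  then have "u \<noteq> []" "last u = last u2" "last u2 \<in> set u2" "set u2 \<subseteq> set x"
    by auto
  then show ?thesis
    by auto
qed

inductive rule_path :: "'a rules \<Rightarrow> nat \<Rightarrow> 'a list list \<Rightarrow> nat \<Rightarrow> bool" for R where
  rule_path_Nil: "rule_path R p [] p"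
| rule_path_Cons: "(p, x, q) \<in> R \<Longrightarrow> rule_path R q xs r \<Longrightarrow> rule_path R p (x # xs) r"

inductive_simps rule_path_Nil_iff: "rule_path R p [] q"

inductive_simps rule_path_Cons_iff: "rule_path R p (x # xs) r"

lemma rule_path_single: "(p, x, q) \<in> R \<Longrightarrow> rule_path R p [x] q"
  by (auto intro: rule_path.intros)

lemma rule_path_append_iff:
  "rule_path R p (xs @ ys) r \<longleftrightarrow> (\<exists>q. rule_path R p xs q \<and> rule_path R q ys r)"
  by (induction xs arbitrary: p) (auto simp: rule_path_Nil_iff rule_path_Cons_iff)

lemma rule_path_append: "rule_path R p xs q \<Longrightarrow> rule_path R q ys r \<Longrightarrow> rule_path R p (xs @ ys) r"
  using rule_path_append_iff by blast

lemma rule_path_invariant: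
  assumes "rule_path R p xs q" "p \<in> P"
    and "\<And>a x b. (a, x, b) \<in> R \<Longrightarrow> a \<in> P \<Longrightarrow> b \<in> P \<and> G x"
  shows "(\<forall>x\<in>set xs. G x) \<and> q \<in> P"
  using assms by induction auto

lemma rule_path_deterministic:
  assumes det: "\<forall>p w q q'. (p, w, q) \<in> R \<longrightarrow> (p, w, q') \<in> R \<longrightarrow> q = q'"
  shows "rule_path R p xs q \<Longrightarrow> rule_path R p xs q' \<Longrightarrow> q = q'"
proof (induction arbitrary: q' rule: rule_path.induct)
  case (rule_path_Nil p)
  then show ?case by (simp add: rule_path_Nil_iff)
next
  case (rule_path_Cons p x q xs r)
  then show ?case using det by (metis rule_path_Cons_iff)
qed

lemma rule_path_pigeonhole:
  assumes det: "\<forall>p w q q'. (p, w, q) \<in> R \<longrightarrow> (p, w, q') \<in> R \<longrightarrow> q = q'"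
    and closed: "\<And>p x q. (p, x, q) \<in> R \<Longrightarrow> p \<in> Q \<Longrightarrow> q \<in> Q" and "finite Q"
    and path: "rule_path R p xs s" and "p \<in> Q" and "card Q \<le> length xs"
  obtains xs1 xs2 xs3 r where "xs = xs1 @ xs2 @ xs3" "xs2 \<noteq> []"
    "rule_path R p xs1 r" "rule_path R r xs2 r" "rule_path R r xs3 s"
proof -
  have in_Q: "q \<in> Q" if "rule_path R p ys q" for ys q
    using rule_path_invariant[OF that \<open>p \<in> Q\<close>, of "\<lambda>_. True"] closed by blast
  define f where "f k = (SOME r. rule_path R p (take k xs) r \<and> rule_path R r (drop k xs) s)" for k
  have f: "rule_path R p (take k xs) (f k) \<and> rule_path R (f k) (drop k xs) s" for k
    unfolding f_def
    by (rule someI_ex) (use path rule_path_append_iff[of R p "take k xs" "drop k xs"] in simp)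
  have "card (f ` {0..length xs}) \<le> card Q"
    using f in_Q by (intro card_mono[OF \<open>finite Q\<close>]) blast
  also have "\<dots> < card {0..length xs}"
    using \<open>card Q \<le> length xs\<close> by simp
  finally have "\<not> inj_on f {0..length xs}"
    by (rule pigeonhole)
  then obtain i j where ij: "i < j" "j \<le> length xs" "f i = f j"
    unfolding inj_on_def by (metis atLeastAtMost_iff linorder_neqE_nat)
  define mid where "mid = take (j - i) (drop i xs)"
  have "take j xs = take i xs @ mid"
    unfolding mid_def using ij by (metis le_add_diff_inverse less_imp_le_nat take_add)
  then obtain r where "rule_path R p (take i xs) r" "rule_path R r mid (f i)"
    using f[of j] ij(3) rule_path_append_iff by metis
  moreover have "r = f i"
    using rule_path_deterministic[OF det] f calculation(1) by blast
  moreover have "xs = take i xs @ mid @ drop j xs"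
    using \<open>take j xs = take i xs @ mid\<close> by (metis append.assoc append_take_drop_id)
  moreover have "mid \<noteq> []"
    unfolding mid_def using ij by simp
  ultimately show ?thesis
    using that f[of i] f[of j] ij(3) by metis
qed

inductive del_run :: "'a rules \<Rightarrow> 'a list \<times> nat \<times> 'a list \<Rightarrow> 'a list list \<Rightarrow>
    'a list \<times> nat \<times> 'a list \<Rightarrow> bool" for R where
  del_run_Nil: "del_run R C [] C"
| del_run_Cons: "\<lbrakk>(p, x, q) \<in> R; no_factor (Sigma_st R p) u; \<not> overlaps u x;
    del_run R (t @ u, q, v) xs C\<rbrakk> \<Longrightarrow> del_run R (t, p, u @ x @ v) (x # xs) C"

lemma del_run_steps: "del_run R C xs C' \<Longrightarrow> (grl_step R)\<^sup>*\<^sup>* C C'"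
proof (induction rule: del_run.induct)
  case (del_run_Cons p x q u t v xs C)
  then have "grl_step R (t, p, u @ x @ v) (t @ u, q, v)"
    by (blast intro: grl_step_delete)
  from this del_run_Cons.IH show ?case
    by (rule converse_rtranclp_into_rtranclp)
qed simp

lemma del_run_path: "del_run R (t, p, y) xs (t', p', y') \<Longrightarrow> rule_path R p xs p'"
  by (induction "(t, p, y)" xs "(t', p', y')" arbitrary: t p y rule: del_run.induct)
    (auto intro: rule_path.intros)

lemma del_run_append:
  "del_run R C (xs @ ys) C'' \<Longrightarrow> \<exists>C'. del_run R C xs C' \<and> del_run R C' ys C''"
proof (induction C "xs @ ys" C'' arbitrary: xs rule: del_run.induct)
  case (del_run_Nil C)
  then show ?case by (intro exI[of _ C]) (auto intro: del_run.del_run_Nil)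
next
  case (del_run_Cons p x q u t v zs C'')
  have step: "del_run R (t, p, u @ x @ v) (x # zs') C'" if "del_run R (t @ u, q, v) zs' C'" for zs' C'
    using del_run_Cons.hyps(1-3) that by (rule del_run.del_run_Cons)
  show ?case
  proof (cases xs)
    case Nil
    with del_run_Cons.hyps(4,6) show ?thesis
      using step[of zs C''] by (intro exI[of _ "(t, p, u @ x @ v)"]) (auto intro: del_run.del_run_Nil)
  next
    case (Cons x' xs')
    with del_run_Cons.hyps(5)[of xs'] del_run_Cons.hyps(6) obtain C' where
      "del_run R (t @ u, q, v) xs' C'" "del_run R C' ys C''" by auto
    with Cons del_run_Cons.hyps(6) show ?thesis
      using step by (intro exI[of _ C']) auto
  qed
qed

lemma del_run_extend:
  "del_run R (t, p, y) xs (t', p', y') \<Longrightarrow> del_run R (t, p, y @ z) xs (t', p', y' @ z)"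
proof (induction "(t, p, y)" xs "(t', p', y')" arbitrary: t p y rule: del_run.induct)
  case (del_run_Cons p x q u t v xs)
  then have "del_run R (t, p, u @ x @ (v @ z)) (x # xs) (t', p', y' @ z)"
    by (intro del_run.del_run_Cons) auto
  then show ?case by simp
qed (auto intro: del_run_Nil)

lemma del_run_length:
  assumes "\<forall>(p, x, q)\<in>R. length x \<le> m"
  shows "del_run R (t, p, y) xs (t', s, y') \<Longrightarrow> length (t @ y) \<le> m * length xs + length (t' @ y')"
proof (induction "(t, p, y)" xs "(t', s, y')" arbitrary: t p y rule: del_run.induct)
  case (del_run_Cons p x q u t v xs)
  with assms have "length x \<le> m" by auto
  with del_run_Cons.hyps(5) show ?case by simp
qed simp

lemma front_step:
  assumes "(p, x, q) \<in> R" "[] \<notin> Sigma_st R p"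
  shows "grl_step R (t, p, x @ v) (t, q, v)"
proof -
  have "no_factor (Sigma_st R p) []"
    using assms(2) by (simp add: no_factor_def)
  moreover have "\<not> overlaps [] x"
    using overlaps_last by blast
  ultimately have "grl_step R (t, p, [] @ x @ v) (t @ [], q, v)"
    using assms(1) by (blast intro: grl_step_delete)
  then show ?thesis by simp
qed

lemma steps_follow_path:
  assumes "\<forall>(p, x, q)\<in>R. x \<noteq> []" and "rule_path R p xs q"
  shows "(grl_step R)\<^sup>*\<^sup>* (t, p, concat xs @ v) (t, q, v)"
  using assms(2)
proof induction
  case (rule_path_Cons p x q xs r)
  have "[] \<notin> Sigma_st R p"
    using assms(1) by (auto simp: Sigma_st_def)
  with rule_path_Cons.hyps(1) have "grl_step R (t, p, x @ (concat xs @ v)) (t, q, concat xs @ v)"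
    by (rule front_step)
  with rule_path_Cons.IH show ?case
    by (simp add: converse_rtranclp_into_rtranclp)
qed simp

lemma steps_consume_path:
  "(grl_step R)\<^sup>*\<^sup>* (t, p, y) (t', p', y') \<Longrightarrow>
   \<exists>xs. rule_path R p xs p' \<and> mset (t @ y) = mset (concat xs) + mset (t' @ y')"
proof (induction "(t', p', y')" arbitrary: t' p' y' rule: rtranclp_induct)
  case base
  then show ?case by (auto intro: rule_path_Nil)
next
  case (step C1)
  obtain t1 p1 y1 where C1: "C1 = (t1, p1, y1)"
    by (cases C1)
  then obtain xs where xs: "rule_path R p xs p1" "mset (t @ y) = mset (concat xs) + mset (t1 @ y1)"
    using step.hyps(3)[OF C1] by blast
  from step.hyps(2)[unfolded C1] show ?case
  proof (cases rule: grl_step.cases)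
    case (delete x u)
    then have "rule_path R p (xs @ [x]) p'"
      using xs(1) by (blast intro: rule_path_append rule_path_single)
    moreover have "mset (t @ y) = mset (concat (xs @ [x])) + mset (t' @ y')"
      using xs(2) delete(1,2) by (simp add: algebra_simps)
    ultimately show ?thesis by blast
  next
    case wrap
    with xs show ?thesis by (intro exI[of _ xs]) (simp add: algebra_simps)
  qed
qed

lemma steps_consume_all:
  assumes "(grl_step R)\<^sup>*\<^sup>* (t, p, y) ([], q, [])"
  obtains xs where "rule_path R p xs q" "mset (t @ y) = mset (concat xs)"
  using steps_consume_path[OF assms] by auto

lemma steps_first_wrap:
  "(grl_step R)\<^sup>*\<^sup>* C E \<Longrightarrow> (\<exists>xs. del_run R C xs E) \<or>
    (\<exists>xs t' s y'. del_run R C xs (t', s, y') \<and> t' \<noteq> [] \<and> no_factor (Sigma_st R s) y' \<and>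
       (grl_step R)\<^sup>*\<^sup>* ([], s, t' @ y') E)"
proof (induction rule: converse_rtranclp_induct)
  case base
  then show ?case by (blast intro: del_run_Nil)
next
  case (step C C1)
  from step.hyps(1) show ?case
  proof (cases rule: grl_step.cases)
    case (delete p x q u t v)
    have "\<not> overlaps u x"
      using delete(5) unfolding overlaps_def by blast
    then have "del_run R C (x # xs) E'" if "del_run R C1 xs E'" for xs E'
      using del_run_Cons[OF delete(3,4) _ that[unfolded delete(2)]] delete(1) by simp
    with step.IH show ?thesis by blast
  next
    case wrap
    with step.hyps(2) show ?thesis by (blast intro: del_run_Nil)
  qed
qed

lemma step_deletes_prefix:
  assumes "grl_step R ([], q, w) C'" "set w \<subseteq> A" "\<forall>a\<in>A. [a] \<in> Sigma_st R q"
  obtains x v q' where "w = x @ v" "(q, x, q') \<in> R" "C' = ([], q', v)"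
  using assms(1)
proof (cases rule: grl_step.cases)
  case (delete x q' u v)
  have "u = []"
  proof (rule ccontr)
    assume "u \<noteq> []"
    then obtain a u' where "u = a # u'"
      by (cases u) auto
    with delete(1) assms(2,3) have "[a] \<in> Sigma_st R q" "sublist [a] u"
      by auto
    with delete(4) show False
      unfolding no_factor_def by blast
  qed
  with delete that show ?thesis
    by simp
qed simp

lemma steps_read_front:
  assumes "\<And>q. Sigma_st R q = {} \<or> (\<forall>a\<in>A. [a] \<in> Sigma_st R q)"
  shows "(grl_step R)\<^sup>*\<^sup>* ([], q, w) ([], q', []) \<Longrightarrow> set w \<subseteq> A \<Longrightarrow>
    \<exists>xs. rule_path R q xs q' \<and> concat xs = w"
proof (induction "([] :: 'a list, q, w)" arbitrary: q w rule: converse_rtranclp_induct)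
  case base
  then show ?case by (auto intro: rule_path_Nil)
next
  case (step C1)
  then have "Sigma_st R q \<noteq> {}"
    by (auto elim!: grl_step.cases simp: Sigma_st_def)
  with assms step.prems step.hyps(1) obtain x v q1 where "w = x @ v" "(q, x, q1) \<in> R" "C1 = ([], q1, v)"
    by (metis step_deletes_prefix)
  with step.hyps(3) step.prems show ?case
    by (fastforce intro: rule_path_Cons)
qed

lemma L_GRL_in_GRLOWJ: "is_GRLOWJFA \<Sigma> Q q0 F R \<Longrightarrow> L_GRL \<Sigma> q0 F R \<in> GRLOWJ"
  unfolding GRLOWJ_def by blast

lemma accepted_path:
  assumes "w \<in> L_GRL \<Sigma> q0 F R"
  obtains xs qf where "qf \<in> F" "rule_path R q0 xs qf" "mset w = mset (concat xs)"
proof -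
  obtain qf where "qf \<in> F" and run: "(grl_step R)\<^sup>*\<^sup>* ([], q0, w) ([], qf, [])"
    using assms unfolding L_GRL_def by blast
  moreover obtain xs where "rule_path R q0 xs qf" "mset ([] @ w) = mset (concat xs)"
    using run by (rule steps_consume_all)
  ultimately show ?thesis
    using that by simp
qed

section \<open>Balanced words\<close>

definition balanced :: "nat list \<Rightarrow> bool" where
  "balanced w \<longleftrightarrow> count (mset w) 0 = count (mset w) 1"

definition Bal :: "nat list set" where
  "Bal = {w \<in> lists {0, 1}. balanced w}"

definition Bal_marked :: "nat list set" where
  "Bal_marked = conc Bal {[2]}"

lemma rev_conc: "rev ` conc A B = conc (rev ` B) (rev ` A)"
proof
  show "rev ` conc A B \<subseteq> conc (rev ` B) (rev ` A)"
  proof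
    fix w
    assume "w \<in> rev ` conc A B"
    then obtain u v where "w = rev v @ rev u" "u \<in> A" "v \<in> B"
      unfolding conc_def by auto
    then show "w \<in> conc (rev ` B) (rev ` A)"
      unfolding conc_def by blast
  qed
  show "conc (rev ` B) (rev ` A) \<subseteq> rev ` conc A B"
  proof
    fix w
    assume "w \<in> conc (rev ` B) (rev ` A)"
    then obtain u v where "w = rev (u @ v)" "u \<in> A" "v \<in> B"
      unfolding conc_def by auto
    then show "w \<in> rev ` conc A B"
      unfolding conc_def by blast
  qed
qed

lemma rev_Bal: "rev ` Bal = Bal"
proof -
  have rev_in: "rev w \<in> Bal" if "w \<in> Bal" for w
    using that by (simp add: Bal_def balanced_def in_lists_conv_set)
  show ?thesis
  proof
    show "rev ` Bal \<subseteq> Bal"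
      using rev_in by blast
    show "Bal \<subseteq> rev ` Bal"
    proof
      fix w
      assume "w \<in> Bal"
      then have "w = rev (rev w)" "rev w \<in> Bal"
        using rev_in by simp_all
      then show "w \<in> rev ` Bal"
        by (rule image_eqI)
    qed
  qed
qed

lemma balanced_concat: "\<forall>x\<in>set xs. balanced x \<Longrightarrow> balanced (concat xs)"
  by (induction xs) (auto simp: balanced_def)

lemma concat_switches_Bal: "set xs \<subseteq> {[0, 1], [1, 0]} \<Longrightarrow> concat xs \<in> Bal"
  by (induction xs) (auto simp: Bal_def balanced_def)

lemma Bal_mset_eq: "mset v = mset u \<Longrightarrow> u \<in> Bal \<Longrightarrow> v \<in> Bal"
  using mset_eq_setD[of v u] unfolding Bal_def balanced_def by auto

lemma first_switch:
  assumes "\<not> (\<exists>d. set y \<subseteq> {d})"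
  obtains k d e v where "y = replicate k d @ d # e # v" "d \<noteq> e"
proof -
  define d where "d = hd y"
  define a where "a = takeWhile (\<lambda>x. x = d) y"
  define b where "b = dropWhile (\<lambda>x. x = d) y"
  have y: "y = a @ b"
    unfolding a_def b_def by simp
  have "y \<noteq> []"
    using assms by auto
  then have "a \<noteq> []"
    unfolding a_def d_def by (cases y) auto
  then obtain k where "length a = Suc k"
    by (cases a) auto
  moreover have "set a \<subseteq> {d}"
    unfolding a_def by (auto dest: set_takeWhileD)
  then have "replicate (length a) d = a"
    by (simp add: replicate_length_same subset_iff)
  ultimately have a: "a = replicate (Suc k) d"
    by simp
  have "b \<noteq> []"
    using assms y \<open>set a \<subseteq> {d}\<close> by auto
  moreover have "hd b \<noteq> d"
    using \<open>b \<noteq> []\<close> unfolding b_def by (rule hd_dropWhile)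
  ultimately obtain e v where b: "b = e # v" "e \<noteq> d"
    by (cases b) auto
  have "y = replicate k d @ d # e # v"
    using y a b by (simp add: replicate_app_Cons_same)
  with b(2) show ?thesis
    using that by blast
qed

lemma Bal_constant:
  assumes "w \<in> Bal" "set w \<subseteq> {d}"
  shows "w = []"
proof (rule ccontr)
  assume "w \<noteq> []"
  have w: "w = replicate (length w) d"
    using assms(2) by (simp add: replicate_length_same subset_iff)
  with \<open>w \<noteq> []\<close> obtain n where n: "w = replicate (Suc n) d"
    by (cases "length w") auto
  with assms(1) show False
    unfolding Bal_def balanced_def by (auto split: if_splits)
qed

lemma Bal_remove_switch:
  assumes "u @ d # e # v \<in> Bal" "d \<noteq> e"
  shows "u @ v \<in> Bal"
proof -
  have "d \<in> {0, 1}" "e \<in> {0, 1}"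
    using assms(1) by (auto simp: Bal_def)
  with assms(2) have "count {#d, e#} 0 = count {#d, e#} 1"
    by auto
  with assms(1) show ?thesis
    by (auto simp: Bal_def balanced_def)
qed

lemma Bal_marked_D:
  assumes "w \<in> Bal_marked"
  shows "w \<noteq> [] \<and> last w = 2 \<and> count (mset w) 2 = 1 \<and> balanced w"
proof -
  obtain u where "w = u @ [2]" "u \<in> Bal"
    using assms unfolding Bal_marked_def conc_def by auto
  moreover from \<open>u \<in> Bal\<close> have "count (mset u) 2 = 0"
    by (auto simp: Bal_def count_eq_zero_iff)
  ultimately show ?thesis
    by (simp add: Bal_def balanced_def)
qed

definition balancing_state :: "nat rules \<Rightarrow> nat \<Rightarrow> bool" where
  "balancing_state R p \<longleftrightarrow>
     (p, [0, 1], p) \<in> R \<and> (p, [1, 0], p) \<in> R \<and> Sigma_st R p = {[0, 1], [1, 0]}"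

lemma not_overlaps_switch:
  assumes "d \<noteq> e"
  shows "\<not> overlaps (replicate k d) [d, e]"
proof
  assume "overlaps (replicate k d) [d, e]"
  then obtain u2 x1 x2 where x: "[d, e] = x1 @ x2" and "u2 \<noteq> []" "x1 \<noteq> []" "u2 @ x1 = [d, e]"
    unfolding overlaps_def by blast
  from \<open>u2 @ x1 = [d, e]\<close> \<open>u2 \<noteq> []\<close> \<open>x1 \<noteq> []\<close> have "x1 = [e]"
    by (cases u2) (auto simp: append_eq_Cons_conv)
  with x assms show False
    by simp
qed

lemma balancing_state_no_factor:
  assumes "balancing_state R p" "set u \<subseteq> {d}"
  shows "no_factor (Sigma_st R p) u"
  unfolding no_factor_def
proof
  assume "\<exists>w\<in>Sigma_st R p. sublist w u"
  then obtain w where w: "w \<in> Sigma_st R p" "sublist w u"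
    by blast
  have "w = [0, 1] \<or> w = [1, 0]"
    using w(1) assms(1) by (simp add: balancing_state_def)
  moreover have "set w \<subseteq> {d}"
    using set_mono_sublist[OF w(2)] assms(2) by (rule order_trans)
  ultimately show False
    by auto
qed

lemma balancing_step:
  assumes "balancing_state R p" and y: "y = replicate k d @ d # e # v" "d \<noteq> e"
    and "d \<in> {0, 1}" "e \<in> {0, 1}"
  shows "grl_step R (t, p, y) (t @ replicate k d, p, v)"
proof -
  have "(p, [d, e], p) \<in> R"
    using assms by (auto simp: balancing_state_def)
  moreover have "no_factor (Sigma_st R p) (replicate k d)"
    by (rule balancing_state_no_factor[OF assms(1), where d = d]) (auto simp: set_replicate_conv_if)
  moreover have "\<not> overlaps (replicate k d) [d, e]"
    using y(2) by (rule not_overlaps_switch)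
  ultimately have "grl_step R (t, p, replicate k d @ [d, e] @ v) (t @ replicate k d, p, v)"
    by (rule grl_step_delete)
  with y(1) show ?thesis by simp
qed

lemma balancing_progress:
  assumes "balancing_state R p" "t @ y \<in> Bal" "t @ y \<noteq> []"
  obtains t' y' where "(grl_step R)\<^sup>*\<^sup>* (t, p, y) (t', p, y')" "t' @ y' \<in> Bal"
    "length (t' @ y') < length (t @ y)"
proof -
  have delete: "\<exists>t' y'. grl_step R (t0, p, y0) (t', p, y') \<and> t' @ y' \<in> Bal \<and>
      length (t' @ y') < length (t0 @ y0)"
    if Bal: "t0 @ y0 \<in> Bal" and switch: "\<not> (\<exists>d. set y0 \<subseteq> {d})" for t0 y0
  proof -
    obtain k d e v where y0: "y0 = replicate k d @ d # e # v" "d \<noteq> e"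
      using first_switch[OF switch] .
    have "d \<in> {0, 1}" "e \<in> {0, 1}"
      using Bal y0(1) by (auto simp: Bal_def)
    with assms(1) y0 have "grl_step R (t0, p, y0) (t0 @ replicate k d, p, v)"
      by (blast intro: balancing_step)
    moreover have "(t0 @ replicate k d) @ v \<in> Bal"
      using Bal_remove_switch[of "t0 @ replicate k d" d e v] Bal y0 by simp
    ultimately show ?thesis
      using y0(1) by fastforce
  qed
  show ?thesis
  proof (cases "\<exists>d. set y \<subseteq> {d}")
    case False
    with delete[OF assms(2)] that show ?thesis
      by (blast intro: r_into_rtranclp)
  next
    case True
    then obtain d where d: "set y \<subseteq> {d}" ..
    have "t \<noteq> []"
      using Bal_constant[of y d] assms(2,3) d by auto
    then have "grl_step R (t, p, y) ([], p, t @ y)"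
      using balancing_state_no_factor[OF assms(1) d] by (rule grl_step.wrap)
    moreover have "\<not> (\<exists>d. set ([] @ t @ y) \<subseteq> {d})"
      using Bal_constant[OF assms(2)] assms(3) by auto
    with delete[of "[]" "t @ y"] assms(2) obtain t' y' where
      "grl_step R ([], p, t @ y) (t', p, y')" "t' @ y' \<in> Bal" "length (t' @ y') < length (t @ y)"
      by auto
    ultimately show ?thesis
      using that by (meson converse_rtranclp_into_rtranclp r_into_rtranclp)
  qed
qed

lemma balancing_run:
  assumes "balancing_state R p"
  shows "t @ y \<in> Bal \<Longrightarrow> (grl_step R)\<^sup>*\<^sup>* (t, p, y) ([], p, [])"
proof (induction "length (t @ y)" arbitrary: t y rule: less_induct)
  case less
  show ?case
  proof (cases "t @ y = []")
    case False
    with assms less.prems obtain t' y' where "(grl_step R)\<^sup>*\<^sup>* (t, p, y) (t', p, y')"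
      and "t' @ y' \<in> Bal" "length (t' @ y') < length (t @ y)"
      by (rule balancing_progress)
    with less.hyps show ?thesis
      by (meson rtranclp_trans)
  qed simp
qed

section \<open>Automata for the three constructions\<close>

definition R_Bal :: "nat rules" where
  "R_Bal = {(0, [0, 1], 0), (0, [1, 0], 0)}"

lemma R_Bal_automaton: "is_GRLOWJFA {0, 1} {0} 0 {0} R_Bal"
  unfolding is_GRLOWJFA_def R_Bal_def by auto

lemma L_R_Bal: "L_GRL {0, 1} 0 {0} R_Bal = Bal"
proof
  show "L_GRL {0, 1} 0 {0} R_Bal \<subseteq> Bal"
  proof
    fix w
    assume "w \<in> L_GRL {0, 1} 0 {0} R_Bal"
    then obtain xs qf where "qf \<in> {0}" and path: "rule_path R_Bal 0 xs qf"
      and "mset w = mset (concat xs)"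
      by (rule accepted_path)
    have "b \<in> {0} \<and> x \<in> {[0, 1], [1, 0]}" if "(a, x, b) \<in> R_Bal" for a x b
      using that by (auto simp: R_Bal_def)
    then have "set xs \<subseteq> {[0, 1], [1, 0]}"
      using rule_path_invariant[OF path, where P = "{0}" and G = "\<lambda>x. x \<in> {[0, 1], [1, 0]}"]
      by blast
    with \<open>mset w = mset (concat xs)\<close> show "w \<in> Bal"
      using Bal_mset_eq concat_switches_Bal by blast
  qed
  show "Bal \<subseteq> L_GRL {0, 1} 0 {0} R_Bal"
  proof
    fix w
    assume "w \<in> Bal"
    moreover have "balancing_state R_Bal 0"
      by (auto simp: balancing_state_def R_Bal_def Sigma_st_def)
    ultimately have "(grl_step R_Bal)\<^sup>*\<^sup>* ([], 0, w) ([], 0, [])"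
      using balancing_run[of R_Bal 0 "[]" w] by simp
    with \<open>w \<in> Bal\<close> show "w \<in> L_GRL {0, 1} 0 {0} R_Bal"
      by (auto simp: L_GRL_def Bal_def)
  qed
qed

definition R_marker :: "nat rules" where
  "R_marker = {(0, [2], 1)}"

lemma R_marker_automaton: "is_GRLOWJFA {2} {0, 1} 0 {1} R_marker"
  unfolding is_GRLOWJFA_def R_marker_def by auto

lemma L_R_marker: "L_GRL {2} 0 {1} R_marker = {[2]}"
proof
  show "L_GRL {2} 0 {1} R_marker \<subseteq> {[2]}"
  proof
    fix w
    assume "w \<in> L_GRL {2} 0 {1} R_marker"
    then obtain xs qf where "qf \<in> {1}" and path: "rule_path R_marker 0 xs qf"
      and "mset w = mset (concat xs)"
      by (rule accepted_path)
    moreover from path \<open>qf \<in> {1}\<close> have "xs = [[2]]"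
      by (cases xs; cases "tl xs") (auto simp: R_marker_def rule_path_Nil_iff rule_path_Cons_iff)
    ultimately show "w \<in> {[2]}"
      by simp
  qed
  have "rule_path R_marker 0 [[2]] 1"
    by (rule rule_path_single) (simp add: R_marker_def)
  then have "(grl_step R_marker)\<^sup>*\<^sup>* ([], 0, [2]) ([], 1, [])"
    using steps_follow_path[of R_marker 0 "[[2]]" 1 "[]" "[]"] by (simp add: R_marker_def)
  then show "{[2]} \<subseteq> L_GRL {2} 0 {1} R_marker"
    by (simp add: L_GRL_def)
qed

text \<open>The sink state 2 only puts every letter into \<open>Sigma_st R_marked_Bal 0\<close>, which forces
  the first deletion to happen at the front of the input.\<close>

definition R_marked_Bal :: "nat rules" where
  "R_marked_Bal = {(0, [2], 1), (0, [0], 2), (0, [1], 2), (1, [0, 1], 1), (1, [1, 0], 1)}"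

lemma R_marked_Bal_automaton: "is_GRLOWJFA {0, 1, 2} {0, 1, 2} 0 {1} R_marked_Bal"
  unfolding is_GRLOWJFA_def R_marked_Bal_def by auto

lemma L_R_marked_Bal_subset: "L_GRL {0, 1, 2} 0 {1} R_marked_Bal \<subseteq> conc {[2]} Bal"
proof
  fix w
  assume "w \<in> L_GRL {0, 1, 2} 0 {1} R_marked_Bal"
  then have w: "set w \<subseteq> {0, 1, 2}" and run: "(grl_step R_marked_Bal)\<^sup>*\<^sup>* ([], 0, w) ([], 1, [])"
    unfolding L_GRL_def by auto
  from run obtain C1 where first: "grl_step R_marked_Bal ([], 0, w) C1"
    and rest: "(grl_step R_marked_Bal)\<^sup>*\<^sup>* C1 ([], 1, [])"
    by (cases rule: converse_rtranclpE) auto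
  have letters: "\<forall>a\<in>{0, 1, 2}. [a] \<in> Sigma_st R_marked_Bal 0"
    by (auto simp: Sigma_st_def R_marked_Bal_def)
  obtain x v q where split: "w = x @ v" and "(0, x, q) \<in> R_marked_Bal" and "C1 = ([], q, v)"
    by (rule step_deletes_prefix[OF first w letters])
  obtain xs where path: "rule_path R_marked_Bal q xs 1" and "mset v = mset (concat xs)"
    using steps_consume_path[OF rest[unfolded \<open>C1 = ([], q, v)\<close>]] by auto
  have "b \<in> {2}" if "(a, y, b) \<in> R_marked_Bal" "a \<in> {2}" for a y b
    using that by (auto simp: R_marked_Bal_def)
  then have "q \<noteq> 2"
    using rule_path_invariant[OF path, where P = "{2}" and G = "\<lambda>_. True"] by auto
  with \<open>(0, x, q) \<in> R_marked_Bal\<close> have "x = [2]" "q = 1"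
    by (auto simp: R_marked_Bal_def)
  have "b \<in> {1} \<and> y \<in> {[0, 1], [1, 0]}" if "(a, y, b) \<in> R_marked_Bal" "a \<in> {1}" for a y b
    using that by (auto simp: R_marked_Bal_def)
  then have "set xs \<subseteq> {[0, 1], [1, 0]}"
    using rule_path_invariant[OF path, where P = "{1}" and G = "\<lambda>x. x \<in> {[0, 1], [1, 0]}"]
      \<open>q = 1\<close> by blast
  then have "v \<in> Bal"
    using Bal_mset_eq concat_switches_Bal \<open>mset v = mset (concat xs)\<close> by blast
  with split \<open>x = [2]\<close> show "w \<in> conc {[2]} Bal"
    unfolding conc_def by blast
qed

lemma marked_Bal_subset_L_R_marked_Bal: "conc {[2]} Bal \<subseteq> L_GRL {0, 1, 2} 0 {1} R_marked_Bal"
proof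
  fix w
  assume "w \<in> conc {[2]} Bal"
  then obtain v where "w = [2] @ v" "v \<in> Bal"
    unfolding conc_def by auto
  have "grl_step R_marked_Bal ([], 0, [2] @ v) ([], 1, v)"
    by (rule front_step) (auto simp: R_marked_Bal_def Sigma_st_def)
  moreover have "balancing_state R_marked_Bal 1"
    by (auto simp: balancing_state_def R_marked_Bal_def Sigma_st_def)
  then have "(grl_step R_marked_Bal)\<^sup>*\<^sup>* ([], 1, v) ([], 1, [])"
    using balancing_run[of R_marked_Bal 1 "[]" v] \<open>v \<in> Bal\<close> by simp
  ultimately have "(grl_step R_marked_Bal)\<^sup>*\<^sup>* ([], 0, w) ([], 1, [])"
    using \<open>w = [2] @ v\<close> by (simp add: converse_rtranclp_into_rtranclp)
  moreover have "w \<in> lists {0, 1, 2}"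
    using \<open>w = [2] @ v\<close> \<open>v \<in> Bal\<close> by (auto simp: Bal_def)
  ultimately show "w \<in> L_GRL {0, 1, 2} 0 {1} R_marked_Bal"
    by (auto simp: L_GRL_def)
qed

lemma L_R_marked_Bal: "L_GRL {0, 1, 2} 0 {1} R_marked_Bal = conc {[2]} Bal"
  using L_R_marked_Bal_subset marked_Bal_subset_L_R_marked_Bal by (rule equalityI)

definition R_one_marker :: "nat rules" where
  "R_one_marker = {(0, [2], 1), (1, [0, 1], 1), (1, [1, 0], 1)}"

definition R_marker_last :: "nat rules" where
  "R_marker_last = {(0, [0], 0), (0, [1], 0), (0, [2], 1)}"

lemma R_one_marker_automaton: "is_GRLOWJFA {0, 1, 2} {0, 1} 0 {1} R_one_marker"
  unfolding is_GRLOWJFA_def R_one_marker_def by auto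

lemma R_marker_last_automaton: "is_GRLOWJFA {0, 1, 2} {0, 1} 0 {1} R_marker_last"
  unfolding is_GRLOWJFA_def R_marker_last_def by auto

lemma L_R_one_marker_balanced:
  assumes "w \<in> L_GRL {0, 1, 2} 0 {1} R_one_marker"
  shows "balanced w"
proof -
  obtain xs qf where path: "rule_path R_one_marker 0 xs qf" and "mset w = mset (concat xs)"
    using assms by (rule accepted_path)
  have "b \<in> UNIV \<and> balanced y" if "(a, y, b) \<in> R_one_marker" for a y b
    using that by (auto simp: R_one_marker_def balanced_def)
  then have "balanced (concat xs)"
    using rule_path_invariant[OF path, where P = UNIV and G = balanced] balanced_concat by blast
  with \<open>mset w = mset (concat xs)\<close> show ?thesis
    by (simp add: balanced_def)
qed

lemma Bal_marked_subset_L_R_one_marker: "Bal_marked \<subseteq> L_GRL {0, 1, 2} 0 {1} R_one_marker"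
proof
  fix w
  assume "w \<in> Bal_marked"
  then obtain u where w: "w = u @ [2] @ []" and "u \<in> Bal"
    unfolding Bal_marked_def conc_def by auto
  have "2 \<notin> set u"
    using \<open>u \<in> Bal\<close> by (auto simp: Bal_def)
  then have "no_factor (Sigma_st R_one_marker 0) u"
    by (auto simp: no_factor_def Sigma_st_def R_one_marker_def dest: set_mono_sublist)
  moreover have "\<not> overlaps u [2]"
  proof
    assume "overlaps u [2]"
    then have "u \<noteq> []" "last u = 2"
      using overlaps_last[of u "[2]"] by auto
    with \<open>2 \<notin> set u\<close> show False
      using last_in_set by metis
  qed
  ultimately have "grl_step R_one_marker ([], 0, w) ([] @ u, 1, [])"
    unfolding w by (intro grl_step_delete) (auto simp: R_one_marker_def)
  moreover have "balancing_state R_one_marker 1"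
    by (auto simp: balancing_state_def R_one_marker_def Sigma_st_def)
  then have "(grl_step R_one_marker)\<^sup>*\<^sup>* (u, 1, []) ([], 1, [])"
    using balancing_run[of R_one_marker 1 u "[]"] \<open>u \<in> Bal\<close> by simp
  ultimately have "(grl_step R_one_marker)\<^sup>*\<^sup>* ([], 0, w) ([], 1, [])"
    by (simp add: converse_rtranclp_into_rtranclp)
  moreover have "w \<in> lists {0, 1, 2}"
    using w \<open>u \<in> Bal\<close> by (auto simp: Bal_def)
  ultimately show "w \<in> L_GRL {0, 1, 2} 0 {1} R_one_marker"
    by (auto simp: L_GRL_def)
qed

lemma rule_path_R_marker_last:
  "rule_path R_marker_last 0 xs 1 \<Longrightarrow> concat xs \<in> conc (lists {0, 1}) {[2]}"
proof (induction xs)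
  case Nil
  then show ?case by (simp add: rule_path_Nil_iff)
next
  case (Cons x xs)
  then obtain q where "(0, x, q) \<in> R_marker_last" and path: "rule_path R_marker_last q xs 1"
    by (auto simp: rule_path_Cons_iff)
  then consider "x = [0] \<or> x = [1]" "q = 0" | "x = [2]" "q = 1"
    by (auto simp: R_marker_last_def)
  then show ?case
  proof cases
    case 1
    with Cons.IH path obtain u where "concat xs = u @ [2]" "u \<in> lists {0, 1}"
      unfolding conc_def by auto
    with 1 show ?thesis
      unfolding conc_def by (intro CollectI exI[of _ "x @ u"] exI[of _ "[2]"]) auto
  next
    case 2
    with path have "xs = []"
      by (cases xs) (auto simp: rule_path_Cons_iff R_marker_last_def)
    with 2 show ?thesis
      unfolding conc_def by auto
  qed
qed

lemma L_R_marker_last: "L_GRL {0, 1, 2} 0 {1} R_marker_last = conc (lists {0, 1}) {[2]}"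
proof
  show "L_GRL {0, 1, 2} 0 {1} R_marker_last \<subseteq> conc (lists {0, 1}) {[2]}"
  proof
    fix w
    assume "w \<in> L_GRL {0, 1, 2} 0 {1} R_marker_last"
    then have "set w \<subseteq> {0, 1, 2}" "(grl_step R_marker_last)\<^sup>*\<^sup>* ([], 0, w) ([], 1, [])"
      unfolding L_GRL_def by auto
    moreover have "Sigma_st R_marker_last q = {} \<or> (\<forall>a\<in>{0, 1, 2}. [a] \<in> Sigma_st R_marker_last q)"
      for q
      by (auto simp: Sigma_st_def R_marker_last_def)
    ultimately obtain xs where "rule_path R_marker_last 0 xs 1" "concat xs = w"
      using steps_read_front by metis
    then show "w \<in> conc (lists {0, 1}) {[2]}"
      using rule_path_R_marker_last by blast
  qed
  show "conc (lists {0, 1}) {[2]} \<subseteq> L_GRL {0, 1, 2} 0 {1} R_marker_last"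
  proof
    fix w :: "nat list"
    assume "w \<in> conc (lists {0, 1}) {[2]}"
    then obtain u where w: "w = concat (map (\<lambda>a. [a]) u @ [[2]]) @ []" and "u \<in> lists {0, 1}"
      unfolding conc_def by auto
    have "rule_path R_marker_last 0 (map (\<lambda>a. [a]) u) 0"
      using \<open>u \<in> lists {0, 1}\<close>
      by (induction u) (auto simp: R_marker_last_def intro: rule_path.intros)
    then have "rule_path R_marker_last 0 (map (\<lambda>a. [a]) u @ [[2]]) 1"
      by (rule rule_path_append) (simp add: rule_path_single R_marker_last_def)
    then have "(grl_step R_marker_last)\<^sup>*\<^sup>* ([], 0, w) ([], 1, [])"
      unfolding w by (rule steps_follow_path[rotated]) (auto simp: R_marker_last_def)
    moreover have "w \<in> lists {0, 1, 2}"
      using w \<open>u \<in> lists {0, 1}\<close> by auto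
    ultimately show "w \<in> L_GRL {0, 1, 2} 0 {1} R_marker_last"
      by (auto simp: L_GRL_def)
  qed
qed

lemma Bal_marked_inter:
  "L_GRL {0, 1, 2} 0 {1} R_one_marker \<inter> L_GRL {0, 1, 2} 0 {1} R_marker_last = Bal_marked"
proof
  show "L_GRL {0, 1, 2} 0 {1} R_one_marker \<inter> L_GRL {0, 1, 2} 0 {1} R_marker_last \<subseteq> Bal_marked"
  proof
    fix w
    assume "w \<in> L_GRL {0, 1, 2} 0 {1} R_one_marker \<inter> L_GRL {0, 1, 2} 0 {1} R_marker_last"
    then have "balanced w" "w \<in> conc (lists {0, 1}) {[2]}"
      using L_R_one_marker_balanced L_R_marker_last by auto
    then show "w \<in> Bal_marked"
      unfolding Bal_marked_def conc_def Bal_def balanced_def by auto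
  qed
  show "Bal_marked \<subseteq> L_GRL {0, 1, 2} 0 {1} R_one_marker \<inter> L_GRL {0, 1, 2} 0 {1} R_marker_last"
    using Bal_marked_subset_L_R_one_marker L_R_marker_last
    unfolding Bal_marked_def conc_def Bal_def by auto
qed

lemma GRLOWJ_inter_Bal_marked: "\<exists>L1\<in>GRLOWJ. \<exists>L2\<in>GRLOWJ. L1 \<inter> L2 = Bal_marked"
  using L_GRL_in_GRLOWJ[OF R_one_marker_automaton] L_GRL_in_GRLOWJ[OF R_marker_last_automaton]
    Bal_marked_inter by blast

lemma GRLOWJ_conc_Bal_marked: "\<exists>L1\<in>GRLOWJ. \<exists>L2\<in>GRLOWJ. conc L1 L2 = Bal_marked"
  using L_GRL_in_GRLOWJ[OF R_Bal_automaton] L_GRL_in_GRLOWJ[OF R_marker_automaton]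
  unfolding L_R_Bal L_R_marker Bal_marked_def by blast

lemma GRLOWJ_rev_Bal_marked: "\<exists>L\<in>GRLOWJ. rev ` L = Bal_marked"
proof
  show "rev ` conc {[2]} Bal = Bal_marked"
    unfolding rev_conc rev_Bal Bal_marked_def by simp
  show "conc {[2]} Bal \<in> GRLOWJ"
    using L_GRL_in_GRLOWJ[OF R_marked_Bal_automaton] unfolding L_R_marked_Bal .
qed

section \<open>The marked balanced words are not in GRLOWJ\<close>

definition sorted_marked :: "nat list \<Rightarrow> bool" where
  "sorted_marked w \<longleftrightarrow>
     sorted w \<and> set w \<subseteq> {0, 1, 2} \<and> w \<noteq> [] \<and> last w = 2 \<and> count (mset w) 2 = 1"

lemma sorted_marked_delete:
  assumes "sorted_marked (a @ x @ b)" "2 \<notin> set x" "x \<noteq> []"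
  shows "sorted_marked (a @ b) \<and> sorted_marked b"
proof -
  have s: "sorted a" "sorted x" "sorted b" "\<forall>i\<in>set a. \<forall>j\<in>set x. i \<le> j"
     "\<forall>i\<in>set a. \<forall>j\<in>set b. i \<le> j" "\<forall>i\<in>set x. \<forall>j\<in>set b. i \<le> j"
    using assms(1) unfolding sorted_marked_def by (auto simp: sorted_append)
  have "b \<noteq> []"
  proof
    assume "b = []"
    then have "last x = 2"
      using assms(1,3) by (simp add: sorted_marked_def)
    with assms(2,3) show False
      using last_in_set by metis
  qed
  then have "last b = 2"
    using assms(1) by (simp add: sorted_marked_def)
  with \<open>b \<noteq> []\<close> have "count (mset b) 2 \<ge> 1"
    by (metis One_nat_def Suc_leI count_greater_zero_iff last_in_set set_mset_mset)
  moreover have "count (mset x) 2 = 0"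
    using assms(2) by (simp add: count_eq_zero_iff)
  moreover have "count (mset a) 2 + count (mset x) 2 + count (mset b) 2 = 1"
    using assms(1) unfolding sorted_marked_def by simp
  ultimately have "count (mset b) 2 = 1" "count (mset a) 2 = 0"
    by linarith+
  with s \<open>b \<noteq> []\<close> \<open>last b = 2\<close> assms(1) show ?thesis
    unfolding sorted_marked_def by (auto simp: sorted_append)
qed

lemma del_run_sorted_marked:
  assumes "\<forall>(p, x, q)\<in>R. x \<noteq> []"
  shows "del_run R (t, p, y) xs (t', s, y') \<Longrightarrow> \<forall>x\<in>set xs. 2 \<notin> set x \<Longrightarrow>
    sorted_marked y \<Longrightarrow> sorted_marked (t @ y) \<Longrightarrow> sorted_marked y' \<and> sorted_marked (t' @ y')"
proof (induction "(t, p, y)" xs "(t', s, y')" arbitrary: t p y rule: del_run.induct)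
  case (del_run_Cons p x q u t v xs)
  have "x \<noteq> []"
    using assms del_run_Cons.hyps(1) by auto
  with del_run_Cons.prems have "sorted_marked v" "sorted_marked ((t @ u) @ v)"
    using sorted_marked_delete[of u x v] sorted_marked_delete[of "t @ u" x v] by auto
  with del_run_Cons show ?case
    by auto
qed simp

lemma del_run_ones:
  "del_run R (t, p, y) xs C \<Longrightarrow> set y \<subseteq> {1, 2} \<Longrightarrow> \<forall>x\<in>set xs. 2 \<notin> set x \<Longrightarrow>
   \<forall>x\<in>set xs. set x \<subseteq> {1}"
  by (induction "(t, p, y)" xs C arbitrary: t p y rule: del_run.induct) auto

lemma del_run_sorted_shape:
  assumes "\<forall>(p, x, q)\<in>R. x \<noteq> []"
  shows "del_run R (t, p, y) xs C \<Longrightarrow> sorted_marked y \<Longrightarrow> \<forall>x\<in>set xs. 2 \<notin> set x \<Longrightarrow>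
    \<exists>xs1 xm xs3. xs = xs1 @ xm @ xs3 \<and> length xm \<le> 1 \<and> (\<forall>x\<in>set xs1. set x \<subseteq> {0}) \<and>
      (\<forall>x\<in>set xs3. set x \<subseteq> {1})"
proof (induction "(t, p, y)" xs C arbitrary: t p y rule: del_run.induct)
  case del_run_Nil
  then show ?case by (intro exI[of _ "[]"]) simp
next
  case (del_run_Cons p x q u t v xs C)
  have "x \<noteq> []"
    using assms del_run_Cons.hyps(1) by auto
  then have "sorted_marked v"
    using sorted_marked_delete[of u x v] del_run_Cons.prems by auto
  show ?case
  proof (cases "1 \<in> set x")
    case True
    have "\<forall>j\<in>set v. 1 \<le> j"
      using del_run_Cons.prems(1) True unfolding sorted_marked_def by (auto simp: sorted_append)
    moreover have "set v \<subseteq> {0, 1, 2}"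
      using \<open>sorted_marked v\<close> unfolding sorted_marked_def by simp
    ultimately have "set v \<subseteq> {1, 2}"
      by auto
    then have "\<forall>x\<in>set xs. set x \<subseteq> {1}"
      using del_run_ones[OF del_run_Cons.hyps(4)] del_run_Cons.prems(2) by simp
    then show ?thesis
      by (intro exI[of _ "[]"] exI[of _ "[x]"] exI[of _ xs]) simp
  next
    case False
    have "set x \<subseteq> {0, 1, 2}"
      using del_run_Cons.prems(1) unfolding sorted_marked_def by auto
    with False del_run_Cons.prems(2) have "set x \<subseteq> {0}"
      by auto
    moreover from del_run_Cons.hyps(5)[OF \<open>sorted_marked v\<close>] del_run_Cons.prems(2)
    obtain xs1 xm xs3 where "xs = xs1 @ xm @ xs3" "length xm \<le> 1" "\<forall>x\<in>set xs1. set x \<subseteq> {0}"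
      "\<forall>x\<in>set xs3. set x \<subseteq> {1}"
      by auto
    ultimately show ?thesis
      by (intro exI[of _ "x # xs1"] exI[of _ xm] exI[of _ xs3]) simp
  qed
qed

locale Bal_marked_automaton =
  fixes \<Sigma> :: "nat set" and Q :: "nat set" and q0 :: nat and F :: "nat set" and R :: "nat rules"
  assumes automaton: "is_GRLOWJFA \<Sigma> Q q0 F R"
    and language: "L_GRL \<Sigma> q0 F R = Bal_marked"
begin

lemma finite_states: "finite Q"
  and init_state: "q0 \<in> Q"
  and finite_rules: "finite R"
  and deterministic: "\<forall>p w q q'. (p, w, q) \<in> R \<longrightarrow> (p, w, q') \<in> R \<longrightarrow> q = q'"
  using automaton by (simp_all add: is_GRLOWJFA_def)

lemma rule_in: "(p, x, q) \<in> R \<Longrightarrow> p \<in> Q \<and> q \<in> Q \<and> x \<noteq> [] \<and> set x \<subseteq> \<Sigma>"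
  using automaton unfolding is_GRLOWJFA_def by blast

lemma nonempty_labels: "\<forall>(p, x, q)\<in>R. x \<noteq> []"
  using rule_in by blast

lemma path_in_states: "rule_path R p xs q \<Longrightarrow> p \<in> Q \<Longrightarrow> q \<in> Q"
  by (induction rule: rule_path.induct) (auto dest: rule_in)

lemma path_letters: "rule_path R p xs q \<Longrightarrow> set (concat xs) \<subseteq> \<Sigma>"
  by (induction rule: rule_path.induct) (auto dest: rule_in)

lemma path_concat_nonempty: "rule_path R p xs q \<Longrightarrow> xs \<noteq> [] \<Longrightarrow> concat xs \<noteq> []"
  by (induction rule: rule_path.induct) (auto dest: rule_in)

lemma path_accepted:
  assumes "rule_path R q0 xs qf" "qf \<in> F"
  shows "concat xs \<in> Bal_marked"
proof -
  have "(grl_step R)\<^sup>*\<^sup>* ([], q0, concat xs @ []) ([], qf, [])"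
    using nonempty_labels assms(1) by (rule steps_follow_path)
  moreover have "concat xs \<in> lists \<Sigma>"
    using path_letters[OF assms(1)] by blast
  ultimately have "concat xs \<in> L_GRL \<Sigma> q0 F R"
    using assms(2) unfolding L_GRL_def by auto
  then show ?thesis
    using language by simp
qed

definition reachable :: "nat \<Rightarrow> bool" where
  "reachable p \<longleftrightarrow> (\<exists>xs. rule_path R q0 xs p)"

definition coreachable :: "nat \<Rightarrow> bool" where
  "coreachable p \<longleftrightarrow> (\<exists>xs qf. rule_path R p xs qf \<and> qf \<in> F)"

definition accepts_from :: "nat \<Rightarrow> nat list \<Rightarrow> bool" where
  "accepts_from p w \<longleftrightarrow> (\<exists>qf\<in>F. (grl_step R)\<^sup>*\<^sup>* ([], p, w) ([], qf, []))"

definition successors :: "nat \<Rightarrow> nat set" where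
  "successors p = {q. \<exists>xs. xs \<noteq> [] \<and> rule_path R p xs q}"

definition max_label :: nat where
  "max_label = Max (insert 0 ((\<lambda>(p, x, q). length x) ` R))"

lemma label_length_le: "\<forall>(p, x, q)\<in>R. length x \<le> max_label"
proof (intro ballI, clarify)
  fix p x q
  assume "(p, x, q) \<in> R"
  then have "length x \<in> insert 0 ((\<lambda>(p, x, q). length x) ` R)"
    by force
  then show "length x \<le> max_label"
    unfolding max_label_def using finite_rules by simp
qed

lemma reachable_path: "reachable p \<Longrightarrow> rule_path R p xs q \<Longrightarrow> reachable q"
  unfolding reachable_def using rule_path_append by blast

lemma coreachable_path: "coreachable q \<Longrightarrow> rule_path R p xs q \<Longrightarrow> coreachable p"
  unfolding coreachable_def using rule_path_append by blast

lemma reachable_in_states: "reachable p \<Longrightarrow> p \<in> Q"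
  unfolding reachable_def using path_in_states init_state by blast

lemma successors_subset: "reachable p \<Longrightarrow> successors p \<subseteq> Q"
  using path_in_states reachable_in_states unfolding successors_def by blast

lemma run_coreachable: "(grl_step R)\<^sup>*\<^sup>* (t, p, y) ([], qf, []) \<Longrightarrow> qf \<in> F \<Longrightarrow> coreachable p"
  unfolding coreachable_def using steps_consume_path by blast

lemma marker_letters: "{0, 1, 2} \<subseteq> \<Sigma>"
proof -
  have "[0, 1, 2] \<in> Bal_marked"
    unfolding Bal_marked_def conc_def Bal_def balanced_def by force
  then have "[0, 1, 2] \<in> L_GRL \<Sigma> q0 F R"
    using language by simp
  then show ?thesis
    unfolding L_GRL_def by auto
qed

text \<open>Pumping a cycle between reachable and coreachable states must keep the word in
  \<^const>\<open>Bal_marked\<close>; this forces the cycle to be balanced and free of the marker.\<close>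

lemma cycle_balanced:
  assumes "reachable r" "coreachable r" "rule_path R r cyc r"
  shows "(\<forall>x\<in>set cyc. 2 \<notin> set x) \<and> balanced (concat cyc)"
proof -
  obtain z where z: "rule_path R q0 z r"
    using assms(1) unfolding reachable_def by blast
  obtain w qf where w: "rule_path R r w qf" "qf \<in> F"
    using assms(2) unfolding coreachable_def by blast
  have zw: "concat (z @ w) \<in> Bal_marked"
    using path_accepted[OF rule_path_append[OF z w(1)] w(2)] .
  have once: "count (mset (concat z)) 2 + count (mset (concat w)) 2 = 1"
    "count (mset (concat z)) 0 + count (mset (concat w)) 0 =
     count (mset (concat z)) 1 + count (mset (concat w)) 1"
    using Bal_marked_D[OF zw] unfolding balanced_def by simp_all
  have zcw: "concat (z @ cyc @ w) \<in> Bal_marked"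
    using path_accepted[OF rule_path_append[OF z rule_path_append[OF assms(3) w(1)]] w(2)] .
  have twice:
    "count (mset (concat z)) 2 + count (mset (concat cyc)) 2 + count (mset (concat w)) 2 = 1"
    "count (mset (concat z)) 0 + count (mset (concat cyc)) 0 + count (mset (concat w)) 0 =
     count (mset (concat z)) 1 + count (mset (concat cyc)) 1 + count (mset (concat w)) 1"
    using Bal_marked_D[OF zcw] unfolding balanced_def by simp_all
  from once twice have "count (mset (concat cyc)) 2 = 0" "balanced (concat cyc)"
    unfolding balanced_def by linarith+
  moreover from this(1) have "2 \<notin> set (concat cyc)"
    by (metis count_eq_zero_iff set_mset_mset)
  ultimately show ?thesis
    by simp
qed

lemma marker_deleted_last:
  assumes "reachable p" "del_run R (t, p, y) (x # xs) (t', s, y')"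
    "(grl_step R)\<^sup>*\<^sup>* (t', s, y') ([], qf, [])" "qf \<in> F" "2 \<in> set x"
  shows "xs = [] \<and> t' = [] \<and> y' = []"
proof -
  obtain z where z: "rule_path R q0 z p"
    using assms(1) unfolding reachable_def by blast
  from assms(2) obtain u v q where y: "y = u @ x @ v" and "(p, x, q) \<in> R"
    and rest: "del_run R (t @ u, q, v) xs (t', s, y')"
    by (auto elim: del_run.cases)
  have "(grl_step R)\<^sup>*\<^sup>* (t @ u, q, v) ([], qf, [])"
    using del_run_steps[OF rest] assms(3) by simp
  then obtain ys where ys: "rule_path R q ys qf" "mset ((t @ u) @ v) = mset (concat ys)"
    by (rule steps_consume_all)
  have "rule_path R q0 (z @ [x] @ ys) qf"
    using rule_path_append[OF z rule_path_append[OF rule_path_single[OF \<open>(p, x, q) \<in> R\<close>] ys(1)]] .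
  from Bal_marked_D[OF path_accepted[OF this assms(4)]]
  have last: "last (concat z @ x @ concat ys) = 2"
    and one: "count (mset (concat z)) 2 + count (mset x) 2 + count (mset (concat ys)) 2 = 1"
    by auto
  have "concat ys = []"
  proof (rule ccontr)
    assume "concat ys \<noteq> []"
    with last have "last (concat ys) = 2"
      by simp
    with \<open>concat ys \<noteq> []\<close> have "2 \<in> set (concat ys)"
      using last_in_set by metis
    then have "count (mset (concat ys)) 2 \<ge> 1"
      by (simp add: Suc_le_eq)
    moreover have "count (mset x) 2 \<ge> 1"
      using assms(5) by (simp add: Suc_le_eq)
    ultimately show False
      using one by linarith
  qed
  with ys(2) have "t @ u = [] \<and> v = []"
    by simp
  with rest have "del_run R ([], q, []) xs (t', s, y')"
    by simp
  then show ?thesis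
    by (cases rule: del_run.cases) (use nonempty_labels in auto)
qed

lemma marker_kept:
  assumes "reachable p" "del_run R (t, p, y) xs (t', s, y')"
    "(grl_step R)\<^sup>*\<^sup>* (t', s, y') ([], qf, [])" "qf \<in> F" "t' \<noteq> [] \<or> y' \<noteq> []"
  shows "\<forall>x\<in>set xs. 2 \<notin> set x"
proof (rule ccontr)
  assume "\<not> ?thesis"
  then obtain xs1 x xs2 where xs: "xs = xs1 @ x # xs2" and "2 \<in> set x"
    by (metis split_list)
  with assms(2) obtain C0 where "del_run R (t, p, y) xs1 C0" "del_run R C0 (x # xs2) (t', s, y')"
    using del_run_append by blast
  moreover obtain t0 p0 y0 where C0: "C0 = (t0, p0, y0)"
    by (cases C0)
  ultimately have "reachable p0" "del_run R (t0, p0, y0) (x # xs2) (t', s, y')"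
    using reachable_path[OF assms(1)] del_run_path by blast+
  from marker_deleted_last[OF this assms(3,4) \<open>2 \<in> set x\<close>] assms(5) show False
    by simp
qed

lemma unary_path_short:
  assumes "reachable p" "rule_path R p xs s" "coreachable s"
    and "\<forall>x\<in>set xs. set x \<subseteq> {d}" "d \<in> {0, 1}"
  shows "length xs < card Q"
proof (rule ccontr)
  assume "\<not> ?thesis"
  then have long: "card Q \<le> length xs"
    by simp
  have closed: "q \<in> Q" if "(p, x, q) \<in> R" "p \<in> Q" for p x q
    using rule_in that by blast
  obtain xs1 xs2 xs3 r where xs: "xs = xs1 @ xs2 @ xs3" and "xs2 \<noteq> []"
    and p1: "rule_path R p xs1 r" and cyc: "rule_path R r xs2 r" and p3: "rule_path R r xs3 s"
    by (rule rule_path_pigeonhole[OF deterministic closed finite_states assms(2)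
        reachable_in_states[OF assms(1)] long])
  have "balanced (concat xs2)"
    using cycle_balanced[OF reachable_path[OF assms(1) p1] coreachable_path[OF assms(3) p3] cyc]
    by blast
  moreover have "set (concat xs2) \<subseteq> {d}"
    using assms(4) xs by auto
  moreover from this assms(5) have "set (concat xs2) \<subseteq> {0, 1}"
    by blast
  ultimately have "concat xs2 \<in> Bal"
    by (simp add: Bal_def lists_eq_set)
  then have "concat xs2 = []"
    using \<open>set (concat xs2) \<subseteq> {d}\<close> by (rule Bal_constant)
  with path_concat_nonempty[OF cyc \<open>xs2 \<noteq> []\<close>] show False
    by simp
qed

lemma marker_free_run_short:
  assumes "reachable p" "del_run R (t, p, y) xs (t', s, y')" "coreachable s"
    and "sorted_marked y" "\<forall>x\<in>set xs. 2 \<notin> set x"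
  shows "length xs + 1 \<le> 2 * card Q"
proof -
  obtain xs1 xm xs3 where xs: "xs = xs1 @ xm @ xs3" "length xm \<le> 1"
    and zeros: "\<forall>x\<in>set xs1. set x \<subseteq> {0}" and ones: "\<forall>x\<in>set xs3. set x \<subseteq> {1}"
    using del_run_sorted_shape[OF nonempty_labels assms(2,4,5)] by blast
  have "rule_path R p (xs1 @ xm @ xs3) s"
    using del_run_path[OF assms(2)] xs(1) by simp
  then obtain r1 r2 where p1: "rule_path R p xs1 r1"
    and pm: "rule_path R r1 xm r2" and p3: "rule_path R r2 xs3 s"
    unfolding rule_path_append_iff by blast
  have "coreachable r1"
    using coreachable_path[OF assms(3) rule_path_append[OF pm p3]] .
  then have "length xs1 < card Q"
    using unary_path_short[OF assms(1) p1 _ zeros] by simp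
  moreover have "reachable r2"
    using reachable_path[OF reachable_path[OF assms(1) p1] pm] .
  then have "length xs3 < card Q"
    using unary_path_short[OF _ p3 assms(3) ones] by simp
  ultimately show ?thesis
    using xs by simp
qed

lemma wrap_sorted_marked:
  assumes "reachable p" "sorted_marked T" and dr: "del_run R ([], p, T) xs (t', s, y')"
    and "t' \<noteq> []" and nf: "no_factor (Sigma_st R s) y'" and "accepts_from s (t' @ y')"
  shows "sorted_marked y' \<and> sorted_marked (t' @ y')"
proof -
  obtain qf where "qf \<in> F" and run: "(grl_step R)\<^sup>*\<^sup>* ([], s, t' @ y') ([], qf, [])"
    using assms(6) unfolding accepts_from_def by blast
  have "grl_step R (t', s, y') ([], s, t' @ y')"
    using \<open>t' \<noteq> []\<close> nf by (rule grl_step.wrap)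
  from this run have "(grl_step R)\<^sup>*\<^sup>* (t', s, y') ([], qf, [])"
    by (rule converse_rtranclp_into_rtranclp)
  with assms(1) dr \<open>qf \<in> F\<close> \<open>t' \<noteq> []\<close> have "\<forall>x\<in>set xs. 2 \<notin> set x"
    using marker_kept by blast
  then show ?thesis
    using del_run_sorted_marked[OF nonempty_labels dr] assms(2) by simp
qed

lemma wrap_cycle_accepted:
  assumes z: "rule_path R q0 z p" and dr: "del_run R ([], p, T) xs (t', s, y')"
    and "t' \<noteq> []" and nf: "no_factor (Sigma_st R s) y'" and "\<not> overlaps y' x"
    and "(s, x, q) \<in> R" and rest: "rule_path R q rest s" and "set T \<subseteq> \<Sigma>"
    and "accepts_from s (t' @ y')"
  shows "concat z @ T @ x @ concat rest \<in> Bal_marked"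
proof -
  obtain qf where "qf \<in> F" and acc: "(grl_step R)\<^sup>*\<^sup>* ([], s, t' @ y') ([], qf, [])"
    using \<open>accepts_from s (t' @ y')\<close> unfolding accepts_from_def by blast
  have "no_factor (Sigma_st R s) []"
    using nonempty_labels by (auto simp: no_factor_def Sigma_st_def)
  have "(grl_step R)\<^sup>*\<^sup>* ([], q0, concat z @ T @ x @ concat rest) ([], p, T @ x @ concat rest)"
    using steps_follow_path[OF nonempty_labels z, of "[]" "T @ x @ concat rest"] by simp
  also have "(grl_step R)\<^sup>*\<^sup>* \<dots> (t', s, y' @ x @ concat rest)"
    using del_run_steps[OF del_run_extend[OF dr]] .
  also have "grl_step R \<dots> (t' @ y', q, concat rest)"
    using \<open>(s, x, q) \<in> R\<close> nf \<open>\<not> overlaps y' x\<close> by (rule grl_step_delete)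
  also have "(grl_step R)\<^sup>*\<^sup>* \<dots> (t' @ y', s, [])"
    using steps_follow_path[OF nonempty_labels rest, of "t' @ y'" "[]"] by simp
  also have "grl_step R \<dots> ([], s, t' @ y')"
    using grl_step.wrap[of "t' @ y'" R s "[]"] \<open>t' \<noteq> []\<close> \<open>no_factor (Sigma_st R s) []\<close> by simp
  also note acc
  finally have "(grl_step R)\<^sup>*\<^sup>* ([], q0, concat z @ T @ x @ concat rest) ([], qf, [])" .
  moreover have "concat z @ T @ x @ concat rest \<in> lists \<Sigma>"
    using path_letters[OF z] path_letters[OF rule_path_Cons[OF \<open>(s, x, q) \<in> R\<close> rest]]
      \<open>set T \<subseteq> \<Sigma>\<close> by auto
  ultimately have "concat z @ T @ x @ concat rest \<in> L_GRL \<Sigma> q0 F R"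
    using \<open>qf \<in> F\<close> unfolding L_GRL_def by blast
  then show ?thesis
    using language by simp
qed

text \<open>If the wrap state \<open>s\<close> lay on a cycle, appending the cycle's label to the input
  would not disturb the deletions made so far; the automaton could then delete the first label
  of the cycle right after \<open>y'\<close>, read the rest from the front, wrap as before and accept a
  word that does not end with the marker.\<close>

lemma wrap_state_acyclic:
  assumes "reachable p" "sorted_marked T" and dr: "del_run R ([], p, T) xs (t', s, y')"
    and "t' \<noteq> []" and nf: "no_factor (Sigma_st R s) y'" and acc: "accepts_from s (t' @ y')"
  shows "s \<notin> successors s"
proof
  assume "s \<in> successors s"
  then obtain cyc where "cyc \<noteq> []" "rule_path R s cyc s"
    unfolding successors_def by blast
  then obtain x rest where cyc: "rule_path R s (x # rest) s"
    by (cases cyc) auto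
  then obtain q where "(s, x, q) \<in> R" "rule_path R q rest s"
    by (auto simp: rule_path_Cons_iff)
  have "reachable s"
    using reachable_path[OF assms(1) del_run_path[OF dr]] .
  moreover have "coreachable s"
    using acc run_coreachable unfolding accepts_from_def by blast
  ultimately have no_marker: "\<forall>x\<in>set (x # rest). 2 \<notin> set x"
    using cycle_balanced cyc by blast
  have "sorted_marked y'"
    using wrap_sorted_marked[OF assms] ..
  then have "\<not> overlaps y' x"
    using overlaps_last[of y' x] no_marker by (auto simp: sorted_marked_def)
  moreover obtain z where "rule_path R q0 z p"
    using assms(1) unfolding reachable_def by blast
  moreover have "set T \<subseteq> \<Sigma>"
    using assms(2) marker_letters by (auto simp: sorted_marked_def)
  ultimately have "concat z @ T @ x @ concat rest \<in> Bal_marked"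
    using wrap_cycle_accepted dr \<open>t' \<noteq> []\<close> nf \<open>(s, x, q) \<in> R\<close> \<open>rule_path R q rest s\<close> acc
    by blast
  then have "last (concat z @ T @ x @ concat rest) = 2"
    using Bal_marked_D by blast
  moreover have "x @ concat rest \<noteq> []"
    using path_concat_nonempty[OF cyc] by simp
  ultimately have "2 \<in> set (x @ concat rest)"
    using last_in_set by (metis append.assoc last_appendR)
  with no_marker show False
    by simp
qed

lemma wrap_successors_psubset:
  assumes "reachable p" "sorted_marked T" and dr: "del_run R ([], p, T) xs (t', s, y')"
    and "t' \<noteq> []" and "no_factor (Sigma_st R s) y'" and "accepts_from s (t' @ y')"
  shows "successors s \<subset> successors p"
proof -
  have path: "rule_path R p xs s"
    using del_run_path[OF dr] .
  have "xs \<noteq> []"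
    using dr \<open>t' \<noteq> []\<close> by (auto elim: del_run.cases)
  with path have "s \<in> successors p"
    unfolding successors_def by blast
  moreover have "successors s \<subseteq> successors p"
  proof
    fix q
    assume "q \<in> successors s"
    then obtain ys where "rule_path R s ys q"
      unfolding successors_def by blast
    with path \<open>xs \<noteq> []\<close> show "q \<in> successors p"
      unfolding successors_def by (intro CollectI exI[of _ "xs @ ys"]) (simp add: rule_path_append)
  qed
  moreover have "s \<notin> successors s"
    using assms by (rule wrap_state_acyclic)
  ultimately show ?thesis
    by blast
qed

lemma marker_free_pass_length:
  assumes "reachable p" "sorted_marked T" and dr: "del_run R ([], p, T) xs (t', s, y')"
    and run: "(grl_step R)\<^sup>*\<^sup>* (t', s, y') ([], qf, [])" "qf \<in> F" and "t' @ y' \<noteq> []"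
  shows "length T + max_label \<le> 2 * card Q * max_label + length (t' @ y')"
proof -
  have "\<forall>x\<in>set xs. 2 \<notin> set x"
    using marker_kept[OF assms(1) dr run] \<open>t' @ y' \<noteq> []\<close> by simp
  with dr have "length xs + 1 \<le> 2 * card Q"
    using marker_free_run_short[OF assms(1) dr run_coreachable[OF run] assms(2)] by blast
  then have "max_label * (length xs + 1) \<le> max_label * (2 * card Q)"
    by (rule mult_le_mono2)
  moreover have "length T \<le> max_label * length xs + length (t' @ y')"
    using del_run_length[OF label_length_le dr] by simp
  ultimately show ?thesis
    by (simp add: algebra_simps)
qed

lemma pass_length:
  assumes "reachable p" "sorted_marked T" and dr: "del_run R ([], p, T) xs (t', s, y')"
    and run: "(grl_step R)\<^sup>*\<^sup>* (t', s, y') ([], qf, [])" "qf \<in> F"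
  shows "length T \<le> 2 * card Q * max_label + length (t' @ y')"
proof (cases "t' @ y' = []")
  case False
  with marker_free_pass_length[OF assms] show ?thesis
    by simp
next
  case True
  have "xs \<noteq> []"
  proof
    assume "xs = []"
    with dr True have "T = []"
      by (auto elim: del_run.cases)
    with assms(2) show False
      by (simp add: sorted_marked_def)
  qed
  then obtain xs' x where "xs = xs' @ [x]"
    by (metis rev_exhaust)
  with dr obtain C1 where dr1: "del_run R ([], p, T) xs' C1" and last: "del_run R C1 [x] (t', s, y')"
    using del_run_append[of R "([], p, T)" xs' "[x]"] by blast
  obtain t1 s1 y1 where C1: "C1 = (t1, s1, y1)"
    by (cases C1)
  have "y1 \<noteq> []"
    using last nonempty_labels unfolding C1 by (auto elim: del_run.cases)
  moreover have "(grl_step R)\<^sup>*\<^sup>* (t1, s1, y1) ([], qf, [])"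
    using del_run_steps[OF last] run(1) unfolding C1 by simp
  ultimately have "length T + max_label \<le> 2 * card Q * max_label + length (t1 @ y1)"
    using marker_free_pass_length[OF assms(1,2) dr1[unfolded C1] _ run(2)] by simp
  moreover have "length (t1 @ y1) \<le> max_label"
    using del_run_length[OF label_length_le last[unfolded C1]] True by simp
  ultimately show ?thesis
    by simp
qed

lemma accepted_length_bound:
  "reachable p \<Longrightarrow> sorted_marked T \<Longrightarrow> accepts_from p T \<Longrightarrow>
   length T \<le> (card (successors p) + 1) * (2 * card Q * max_label)"
proof (induction "card (successors p)" arbitrary: p T rule: less_induct)
  case less
  define B where "B = 2 * card Q * max_label"
  obtain qf where "qf \<in> F" and run: "(grl_step R)\<^sup>*\<^sup>* ([], p, T) ([], qf, [])"
    using less.prems(3) unfolding accepts_from_def by blast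
  from steps_first_wrap[OF run] show ?case
  proof (elim disjE exE conjE)
    fix xs
    assume "del_run R ([], p, T) xs ([], qf, [])"
    from pass_length[OF less.prems(1,2) this _ \<open>qf \<in> F\<close>] show ?thesis
      by simp
  next
    fix xs t' s y'
    assume dr: "del_run R ([], p, T) xs (t', s, y')" and "t' \<noteq> []"
      and nf: "no_factor (Sigma_st R s) y'" and run': "(grl_step R)\<^sup>*\<^sup>* ([], s, t' @ y') ([], qf, [])"
    have acc: "accepts_from s (t' @ y')"
      using run' \<open>qf \<in> F\<close> unfolding accepts_from_def by blast
    note wrap = less.prems(1,2) dr \<open>t' \<noteq> []\<close> nf acc
    have "card (successors s) < card (successors p)"
      using finite_subset[OF successors_subset[OF less.prems(1)] finite_states]
        wrap_successors_psubset[OF wrap] by (simp add: psubset_card_mono)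
    moreover have "reachable s"
      using reachable_path[OF less.prems(1) del_run_path[OF dr]] .
    ultimately have "length (t' @ y') \<le> (card (successors s) + 1) * B"
      unfolding B_def using less.hyps wrap_sorted_marked[OF wrap] acc by blast
    also have "\<dots> \<le> card (successors p) * B"
      using \<open>card (successors s) < card (successors p)\<close> by (intro mult_le_mono1) simp
    finally have "B + length (t' @ y') \<le> (card (successors p) + 1) * B"
      by simp
    moreover have "grl_step R (t', s, y') ([], s, t' @ y')"
      using \<open>t' \<noteq> []\<close> nf by (rule grl_step.wrap)
    with run' have "(grl_step R)\<^sup>*\<^sup>* (t', s, y') ([], qf, [])"
      by (simp add: converse_rtranclp_into_rtranclp)
    then have "length T \<le> B + length (t' @ y')"
      unfolding B_def using pass_length[OF less.prems(1,2) dr _ \<open>qf \<in> F\<close>] by blast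
    ultimately show ?thesis
      unfolding B_def by linarith
  qed
qed

lemma impossible: False
proof -
  define B where "B = 2 * card Q * max_label"
  define n where "n = (card Q + 1) * B"
  define T where "T = replicate n 0 @ replicate n 1 @ [2 :: nat]"
  have "replicate n 0 @ replicate n 1 \<in> Bal"
    by (auto simp: Bal_def balanced_def in_lists_conv_set)
  then have "T \<in> Bal_marked"
    unfolding T_def Bal_marked_def conc_def by force
  then have "accepts_from q0 T"
    using language unfolding L_GRL_def accepts_from_def by auto
  moreover have "sorted_marked T"
    by (auto simp: sorted_marked_def T_def sorted_append)
  moreover have "reachable q0"
    unfolding reachable_def by (blast intro: rule_path_Nil)
  ultimately have "length T \<le> (card (successors q0) + 1) * B"
    unfolding B_def using accepted_length_bound by blast
  also have "\<dots> \<le> n"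
    unfolding n_def using card_mono[OF finite_states successors_subset[OF \<open>reachable q0\<close>]] by simp
  finally show False
    unfolding T_def by simp
qed

end

lemma Bal_marked_not_GRLOWJ: "Bal_marked \<notin> GRLOWJ"
proof
  assume "Bal_marked \<in> GRLOWJ"
  then obtain \<Sigma> Q q0 F R where "is_GRLOWJFA \<Sigma> Q q0 F (R :: nat rules)" "Bal_marked = L_GRL \<Sigma> q0 F R"
    unfolding GRLOWJ_def by blast
  then interpret Bal_marked_automaton \<Sigma> Q q0 F R
    by unfold_locales simp_all
  show False
    by (rule impossible)
qed

theorem proposition6:
  shows "(\<exists>L1 \<in> (GRLOWJ :: nat list set set). \<exists>L2 \<in> GRLOWJ. L1 \<inter> L2 \<notin> GRLOWJ)
       \<and> (\<exists>L1 \<in> (GRLOWJ :: nat list set set). \<exists>L2 \<in> GRLOWJ. conc L1 L2 \<notin> GRLOWJ)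
       \<and> (\<exists>L \<in> (GRLOWJ :: nat list set set). rev ` L \<notin> GRLOWJ)"
proof (intro conjI)
  show "\<exists>L1 \<in> (GRLOWJ :: nat list set set). \<exists>L2 \<in> GRLOWJ. L1 \<inter> L2 \<notin> GRLOWJ"
    using GRLOWJ_inter_Bal_marked Bal_marked_not_GRLOWJ by metis
  show "\<exists>L1 \<in> (GRLOWJ :: nat list set set). \<exists>L2 \<in> GRLOWJ. conc L1 L2 \<notin> GRLOWJ"
    using GRLOWJ_conc_Bal_marked Bal_marked_not_GRLOWJ by metis
  show "\<exists>L \<in> (GRLOWJ :: nat list set set). rev ` L \<notin> GRLOWJ"
    using GRLOWJ_rev_Bal_marked Bal_marked_not_GRLOWJ by metis
qed

end
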